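(* Let $d\ge1$ and let $A$ be the adjacency matrix of a tournament of Type (2) with $n=2d$ vertices whose Seidel matrix has spectrum $\{(-\theta)^d,\theta^d\}$ with $\theta>0$. Then $d$ is even and $I+A-A^T$ is a skew Hadamard matrix.
   Context: A tournament on vertex set $V$ is an orientation of the complete graph on $V$; its adjacency matrix $A$ has $A_{xy}=1$ if $x\to y$ and $0$ otherwise, and its Seidel matrix is $S=\sqrt{-1}(A-A^T)$. Let $\tau_1<\cdots<\tau_s$ be the distinct eigenvalues of $S$ with multiplicities $m_i$, and main angles $\beta_i=\frac1{\sqrt n}\|E_ij\|$, where $E_i$ is the orthogonal projection onto the $\tau_i$-eigenspace and $j$ the all-ones vector. The tournament is of Type (1) if $\beta_1=0$; of Type (2) if $\beta_1\neq0$ and $m_1>1$; of Type (3) if $m_1=1$, $\beta_2=0$ and $c_2<0$, where $c_2=n\beta_1^2/(\tau_1-\tau_2)+\sum_{i=3}^s n\beta_i^2/(\tau_i-\tau_2)$; and of Type (4) otherwise. An $n\times n$ $(\pm1)$-matrix $H$ is skew Hadamard if $H+H^T=2I$ and $HH^T=nI$. *)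

theory Defs
  imports "Jordan_Normal_Form.Schur_Decomposition" "Jordan_Normal_Form.Char_Poly"
begin

definition tournament :: "nat \<Rightarrow> (nat \<Rightarrow> nat \<Rightarrow> bool) \<Rightarrow> bool" where
  "tournament n T \<longleftrightarrow> (\<forall>x<n. \<not> T x x) \<and>
     (\<forall>x<n. \<forall>y<n. x \<noteq> y \<longrightarrow> (T x y \<longleftrightarrow> \<not> T y x))"

definition tour_adj :: "nat \<Rightarrow> (nat \<Rightarrow> nat \<Rightarrow> bool) \<Rightarrow> int mat" where
  "tour_adj n T = mat n n (\<lambda>(x, y). if T x y then 1 else 0)"

definition seidel :: "int mat \<Rightarrow> complex mat" where
  "seidel A = \<i> \<cdot>\<^sub>m map_mat of_int (A - A\<^sup>T)"

definition eigenspace_mat :: "complex mat \<Rightarrow> complex \<Rightarrow> complex vec set" where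
  "eigenspace_mat S \<tau> = {v \<in> carrier_vec (dim_row S). S *\<^sub>v v = \<tau> \<cdot>\<^sub>v v}"

definition eig_proj :: "complex mat \<Rightarrow> complex \<Rightarrow> complex mat" where
  "eig_proj S \<tau> = (THE E. E \<in> carrier_mat (dim_row S) (dim_row S) \<and> E * E = E \<and>
      mat_adjoint E = E \<and> (\<lambda>v. E *\<^sub>v v) ` carrier_vec (dim_row S) = eigenspace_mat S \<tau>)"

definition vnorm :: "complex vec \<Rightarrow> real" where
  "vnorm v = sqrt (\<Sum>i<dim_vec v. (cmod (v $ i))\<^sup>2)"

definition main_angle :: "complex mat \<Rightarrow> complex \<Rightarrow> real" where
  "main_angle S \<tau> = vnorm (eig_proj S \<tau> *\<^sub>v vec (dim_row S) (\<lambda>_. 1)) / sqrt (real (dim_row S))"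

text \<open>Smallest eigenvalue tau_1 (eigenvalues of the Hermitian S are real) and its multiplicity.\<close>
definition least_eig :: "complex mat \<Rightarrow> real" where
  "least_eig S = Min {r :: real. poly (char_poly S) (complex_of_real r) = 0}"

definition least_eig_mult :: "complex mat \<Rightarrow> nat" where
  "least_eig_mult S = order (complex_of_real (least_eig S)) (char_poly S)"

definition type2_tournament :: "nat \<Rightarrow> (nat \<Rightarrow> nat \<Rightarrow> bool) \<Rightarrow> bool" where
  "type2_tournament n T \<longleftrightarrow> tournament n T \<and>
     (let S = seidel (tour_adj n T) in
        main_angle S (complex_of_real (least_eig S)) \<noteq> 0 \<and> least_eig_mult S > 1)"

definition skew_hadamard :: "nat \<Rightarrow> int mat \<Rightarrow> bool" where
  "skew_hadamard n H \<longleftrightarrow> H \<in> carrier_mat n n \<and>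
     (\<forall>i<n. \<forall>j<n. H $$ (i, j) = 1 \<or> H $$ (i, j) = -1) \<and>
     H + H\<^sup>T = 2 \<cdot>\<^sub>m 1\<^sub>m n \<and> H * H\<^sup>T = int n \<cdot>\<^sub>m 1\<^sub>m n"

end

theory Submission
  imports Defs
begin

text \<open>The Seidel matrix \<open>S = i B\<close>, \<open>B = A - A\<^sup>T\<close>, is Hermitian with eigenvalues \<open>\<plusminus>\<theta>\<close>, hence
  \<open>S\<^sup>2 = \<theta>\<^sup>2 I\<close>; as \<open>S\<^sup>2 = B B\<^sup>T\<close>, the rows of the skew \<open>\<plusminus>1\<close> matrix \<open>B\<close> are orthogonal and
  \<open>I + B\<close> is skew Hadamard. Type (2) says that \<open>-\<theta>\<close> has multiplicity \<open>d > 1\<close>, so the order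
  \<open>2d\<close> exceeds 2, and a Hadamard matrix of order greater than 2 has order divisible by 4.
  Instead of diagonalising \<open>S\<close>, the identity \<open>S\<^sup>2 = \<theta>\<^sup>2 I\<close> is obtained from a Schur form: there
  \<open>S\<^sup>2 - \<theta>\<^sup>2 I\<close> is strictly upper triangular, so its square has trace 0, while this trace is
  the sum of squares of the entries of the real symmetric matrix \<open>B B\<^sup>T - \<theta>\<^sup>2 I\<close>.\<close>

definition mat_trace :: "'a::comm_ring_1 mat \<Rightarrow> 'a" where
  "mat_trace A = (\<Sum>i<dim_row A. A $$ (i, i))"

lemma mat_trace_mult_comm:
  fixes A B :: "'a::comm_ring_1 mat"
  assumes "A \<in> carrier_mat n m" "B \<in> carrier_mat m n"
  shows "mat_trace (A * B) = mat_trace (B * A)"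
proof -
  have "mat_trace (A * B) = (\<Sum>i<n. \<Sum>k<m. A $$ (i, k) * B $$ (k, i))"
    using assms by (auto simp: mat_trace_def scalar_prod_def atLeast0LessThan intro!: sum.cong)
  also have "\<dots> = (\<Sum>k<m. \<Sum>i<n. B $$ (k, i) * A $$ (i, k))"
    by (subst sum.swap) (simp add: mult.commute)
  also have "\<dots> = mat_trace (B * A)"
    using assms by (auto simp: mat_trace_def scalar_prod_def atLeast0LessThan intro!: sum.cong)
  finally show ?thesis .
qed

lemma mat_trace_similar_mat_wit:
  assumes "similar_mat_wit A B P Q"
  shows "mat_trace A = mat_trace B"
proof -
  define n where "n = dim_row A"
  from similar_mat_witD[OF n_def assms] have
    B: "B \<in> carrier_mat n n" and P: "P \<in> carrier_mat n n" and Q: "Q \<in> carrier_mat n n"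
    and QP: "Q * P = 1\<^sub>m n" and AB: "A = P * B * Q" by auto
  have "mat_trace A = mat_trace (P * (B * Q))" using AB B P Q by (simp add: assoc_mult_mat)
  also have "\<dots> = mat_trace (B * Q * P)"
    using B P Q by (subst mat_trace_mult_comm[of _ n n]) (auto simp: assoc_mult_mat)
  also have "\<dots> = mat_trace B" using B P Q QP by (simp add: assoc_mult_mat[of _ n n _ n _ n])
  finally show ?thesis .
qed

lemma pow_mat_2:
  fixes A :: "'a::semiring_1 mat"
  assumes "A \<in> carrier_mat n n"
  shows "A ^\<^sub>m 2 = A * A"
  using assms by (simp add: numeral_2_eq_2)

lemma similar_mat_wit_square:
  assumes wit: "similar_mat_wit A B P Q"
  shows "similar_mat_wit (A * A) (B * B) P Q"
  using similar_mat_wit_pow[OF wit, of 2]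
  by (simp only: pow_mat_2[OF similar_mat_witD(4)[OF refl wit]] pow_mat_2[OF similar_mat_witD(5)[OF refl wit]])

lemma similar_mat_wit_minus_smult_one:
  fixes A :: "'a::comm_ring_1 mat"
  assumes wit: "similar_mat_wit A B P Q" and A: "A \<in> carrier_mat n n"
  shows "similar_mat_wit (A - c \<cdot>\<^sub>m 1\<^sub>m n) (B - c \<cdot>\<^sub>m 1\<^sub>m n) P Q"
proof -
  from similar_mat_witD2[OF A wit] have B: "B \<in> carrier_mat n n" and P: "P \<in> carrier_mat n n"
    and Q: "Q \<in> carrier_mat n n" and PQ: "P * Q = 1\<^sub>m n" and QP: "Q * P = 1\<^sub>m n"
    and AB: "A = P * B * Q" by auto
  have "P * (c \<cdot>\<^sub>m 1\<^sub>m n) * Q = c \<cdot>\<^sub>m (P * Q)"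
    using P Q by (simp add: mult_smult_distrib[OF P one_carrier_mat] mult_smult_assoc_mat[OF P Q])
  then have "P * (B - c \<cdot>\<^sub>m 1\<^sub>m n) * Q = P * B * Q - c \<cdot>\<^sub>m (P * Q)"
    using B P Q by (simp add: mult_minus_distrib_mat[of P n n _ n] minus_mult_distrib_mat[of _ n n _ Q n])
  then have "A - c \<cdot>\<^sub>m 1\<^sub>m n = P * (B - c \<cdot>\<^sub>m 1\<^sub>m n) * Q"
    by (simp only: AB PQ)
  moreover have "A - c \<cdot>\<^sub>m 1\<^sub>m n \<in> carrier_mat n n" "B - c \<cdot>\<^sub>m 1\<^sub>m n \<in> carrier_mat n n"
    using A B by auto
  ultimately show ?thesis
    using similar_mat_witI[OF PQ QP _ _ _ P Q] by blast
qed

lemma mat_trace_square_strictly_upper_triangular: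
  assumes N: "N \<in> carrier_mat n n" and zero: "\<And>i j. j \<le> i \<Longrightarrow> i < n \<Longrightarrow> N $$ (i, j) = 0"
  shows "mat_trace (N * N) = 0"
proof -
  have "(N * N) $$ (i, i) = 0" if "i < n" for i
  proof -
    have "(N * N) $$ (i, i) = (\<Sum>k<n. N $$ (i, k) * N $$ (k, i))"
      using N that by (auto simp: scalar_prod_def atLeast0LessThan)
    also have "\<dots> = 0"
      using that by (intro sum.neutral) (metis lessThan_iff mult_zero_left mult_zero_right nat_le_linear zero)
    finally show ?thesis .
  qed
  then show ?thesis using N by (simp add: mat_trace_def)
qed

lemma upper_triangular_square_minus_smult_one_lower_eq_0:
  fixes B :: "'a::comm_ring_1 mat"
  assumes B: "B \<in> carrier_mat n n" and ut: "upper_triangular B"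
    and diag: "B $$ (i, i) * B $$ (i, i) = c" and ij: "j \<le> i" "i < n"
  shows "(B * B - c \<cdot>\<^sub>m 1\<^sub>m n) $$ (i, j) = 0"
proof -
  have "B $$ (i, k) * B $$ (k, j) = 0" if "k < n" "k \<noteq> i" for k
  proof (cases "k < i")
    case True
    then show ?thesis using ut B ij by (simp add: upper_triangularD)
  next
    case False
    then show ?thesis using ut B ij that by (simp add: upper_triangularD)
  qed
  then have "(B * B) $$ (i, j) = B $$ (i, i) * B $$ (i, j)"
    using B ij by (simp add: scalar_prod_def sum.remove[of "{0..<n}" i])
  then show ?thesis
    using B ij diag ut by (cases "j = i") (auto simp: upper_triangularD)
qed

lemma mat_trace_square_minus_smult_one:
  fixes A :: "'a::conjugatable_ordered_field mat"
  assumes A: "A \<in> carrier_mat n n"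
    and cp: "char_poly A = (\<Prod>e \<leftarrow> es. [:- e, 1:])"
    and es: "\<And>e. e \<in> set es \<Longrightarrow> e * e = c"
  shows "mat_trace ((A * A - c \<cdot>\<^sub>m 1\<^sub>m n) * (A * A - c \<cdot>\<^sub>m 1\<^sub>m n)) = 0"
proof -
  obtain B P Q where "schur_decomposition A es = (B, P, Q)"
    by (cases "schur_decomposition A es") auto
  from schur_decomposition[OF A cp this] have wit: "similar_mat_wit A B P Q"
    and ut: "upper_triangular B" and diag: "diag_mat B = es" by auto
  have B: "B \<in> carrier_mat n n" using similar_mat_witD2[OF A wit] by auto
  have diag_sq: "B $$ (k, k) * B $$ (k, k) = c" if "k < n" for k
    using es B that diag by (auto simp: diag_mat_def)
  have "similar_mat_wit (A * A - c \<cdot>\<^sub>m 1\<^sub>m n) (B * B - c \<cdot>\<^sub>m 1\<^sub>m n) P Q"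
    by (rule similar_mat_wit_minus_smult_one[OF similar_mat_wit_square[OF wit] mult_carrier_mat[OF A A]])
  then have "mat_trace ((A * A - c \<cdot>\<^sub>m 1\<^sub>m n) * (A * A - c \<cdot>\<^sub>m 1\<^sub>m n))
      = mat_trace ((B * B - c \<cdot>\<^sub>m 1\<^sub>m n) * (B * B - c \<cdot>\<^sub>m 1\<^sub>m n))"
    by (rule mat_trace_similar_mat_wit[OF similar_mat_wit_square])
  also have "\<dots> = 0"
    using B by (intro mat_trace_square_strictly_upper_triangular
        upper_triangular_square_minus_smult_one_lower_eq_0[OF B ut diag_sq]) auto
  finally show ?thesis .
qed

lemma mat_trace_map_of_real:
  assumes "R \<in> carrier_mat n n"
  shows "mat_trace (map_mat of_real R :: 'a::{real_algebra_1,comm_ring_1} mat) = of_real (mat_trace R)"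
  using assms by (simp add: mat_trace_def)

lemma real_symmetric_eq_0_if_mat_trace_square_eq_0:
  fixes R :: "real mat"
  assumes R: "R \<in> carrier_mat n n" and sym: "R\<^sup>T = R" and tr: "mat_trace (R * R) = 0"
  shows "R = 0\<^sub>m n n"
proof -
  have "mat_trace (R * R) = (\<Sum>i<n. \<Sum>k<n. (R $$ (i, k))\<^sup>2)"
    using R by (auto simp: mat_trace_def scalar_prod_def atLeast0LessThan power2_eq_square
        intro!: sum.cong) (metis R carrier_matD index_transpose_mat(1) sym)
  with tr have "(R $$ (i, k))\<^sup>2 = 0" if "i < n" "k < n" for i k
    using that by (simp add: sum_nonneg_eq_0_iff sum_nonneg)
  then show ?thesis using R by (intro eq_matI) auto
qed

lemma seidel_carrier_mat: "A \<in> carrier_mat n n \<Longrightarrow> seidel A \<in> carrier_mat n n"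
  unfolding seidel_def by (intro smult_carrier_mat map_carrier_mat[THEN iffD2] minus_carrier_mat) simp

lemma seidel_square:
  assumes A: "A \<in> carrier_mat n n"
  shows "seidel A * seidel A = map_mat of_int ((A - A\<^sup>T) * (A - A\<^sup>T)\<^sup>T)"
proof (rule eq_matI)
  fix i j assume "i < dim_row (map_mat of_int ((A - A\<^sup>T) * (A - A\<^sup>T)\<^sup>T) :: complex mat)"
    "j < dim_col (map_mat of_int ((A - A\<^sup>T) * (A - A\<^sup>T)\<^sup>T) :: complex mat)"
  then have ij: "i < n" "j < n" using A by auto
  show "(seidel A * seidel A) $$ (i, j) = map_mat of_int ((A - A\<^sup>T) * (A - A\<^sup>T)\<^sup>T) $$ (i, j)"
    using A ij by (auto simp: seidel_def scalar_prod_def algebra_simps intro!: sum.cong)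
qed (use A in \<open>auto simp: seidel_def\<close>)

lemma gram_skew_part_if_seidel_spectrum_pm:
  fixes A :: "int mat" and \<theta> :: real
  assumes A: "A \<in> carrier_mat n n"
    and cp: "char_poly (seidel A) = [:complex_of_real \<theta>, 1:] ^ d * [:- complex_of_real \<theta>, 1:] ^ d"
  shows "map_mat real_of_int ((A - A\<^sup>T) * (A - A\<^sup>T)\<^sup>T) = \<theta>\<^sup>2 \<cdot>\<^sub>m 1\<^sub>m n"
proof -
  define B where "B = A - A\<^sup>T"
  have B: "B \<in> carrier_mat n n" unfolding B_def using A by (intro minus_carrier_mat) simp
  define R where "R = map_mat real_of_int (B * B\<^sup>T) - \<theta>\<^sup>2 \<cdot>\<^sub>m 1\<^sub>m n"
  have R: "R \<in> carrier_mat n n" unfolding R_def using B by (intro minus_carrier_mat) simp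
  have "R\<^sup>T = R"
    using B by (intro eq_matI) (auto simp: R_def scalar_prod_def mult.commute intro!: sum.cong)
  define S where "S = seidel A"
  define c where "c = complex_of_real (\<theta>\<^sup>2)"
  have S: "S \<in> carrier_mat n n" unfolding S_def using A by (rule seidel_carrier_mat)
  have "char_poly S = (\<Prod>e \<leftarrow> replicate d (- complex_of_real \<theta>) @ replicate d (complex_of_real \<theta>). [:- e, 1:])"
    using cp by (simp add: S_def prod_list_replicate)
  then have "mat_trace ((S * S - c \<cdot>\<^sub>m 1\<^sub>m n) * (S * S - c \<cdot>\<^sub>m 1\<^sub>m n)) = 0"
    by (rule mat_trace_square_minus_smult_one[OF S]) (auto simp: c_def power2_eq_square)
  moreover have "S * S - c \<cdot>\<^sub>m 1\<^sub>m n = map_mat of_real R"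
    using A B by (intro eq_matI) (auto simp: S_def seidel_square R_def B_def c_def)
  ultimately have "of_real (mat_trace (R * R)) = (0 :: complex)"
    using R by (simp add: of_real_hom.mat_hom_mult[OF R R, symmetric] mat_trace_map_of_real[of _ n])
  then have "R = 0\<^sub>m n n"
    using real_symmetric_eq_0_if_mat_trace_square_eq_0[OF R \<open>R\<^sup>T = R\<close>] by simp
  moreover have "map_mat real_of_int (B * B\<^sup>T) = R + \<theta>\<^sup>2 \<cdot>\<^sub>m 1\<^sub>m n"
    using B by (intro eq_matI) (auto simp: R_def)
  ultimately show ?thesis by (simp add: B_def)
qed

lemma index_tour_adj_minus_transpose:
  assumes T: "tournament n T" and ij: "i < n" "j < n"
  shows "(tour_adj n T - (tour_adj n T)\<^sup>T) $$ (i, j) = (if i = j then 0 else if T i j then 1 else -1)"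
proof -
  have "i \<noteq> j \<Longrightarrow> T i j \<longleftrightarrow> \<not> T j i" using T ij unfolding tournament_def by blast
  then show ?thesis using ij by (auto simp: tour_adj_def)
qed

lemma skew_hadamard_one_plus_skew:
  fixes B :: "int mat"
  assumes B: "B \<in> carrier_mat n n" and skew: "B\<^sup>T = - B"
    and pm: "\<And>i j. i < n \<Longrightarrow> j < n \<Longrightarrow> i \<noteq> j \<Longrightarrow> B $$ (i, j) = 1 \<or> B $$ (i, j) = -1"
    and orth: "\<And>i j. i < n \<Longrightarrow> j < n \<Longrightarrow> i \<noteq> j \<Longrightarrow> (B * B\<^sup>T) $$ (i, j) = 0"
  shows "skew_hadamard n (1\<^sub>m n + B)"
proof -
  define H where "H = 1\<^sub>m n + B"
  have H: "H \<in> carrier_mat n n" using B by (simp add: H_def)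
  have B_swap: "B $$ (j, i) = - B $$ (i, j)" if "i < n" "j < n" for i j
    using arg_cong[OF skew, of "\<lambda>M. M $$ (i, j)"] B that by simp
  have B_diag: "B $$ (i, i) = 0" if "i < n" for i
    using B_swap[OF that that] by simp
  have H_index: "H $$ (i, j) = (if i = j then 1 else B $$ (i, j))" if "i < n" "j < n" for i j
    using B that B_diag by (auto simp: H_def)
  have H_pm: "H $$ (i, j) = 1 \<or> H $$ (i, j) = -1" if "i < n" "j < n" for i j
    using that pm by (simp add: H_index)
  have HHT: "(H * H\<^sup>T) $$ (i, j) = (\<Sum>k<n. H $$ (i, k) * H $$ (j, k))" if "i < n" "j < n" for i j
    using H that by (auto simp: scalar_prod_def atLeast0LessThan intro!: sum.cong)
  have rows: "(H * H\<^sup>T) $$ (i, j) = (if i = j then int n else 0)" if ij: "i < n" "j < n" for i j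
  proof (cases "i = j")
    case True
    have "H $$ (i, k) * H $$ (i, k) = 1" if "k < n" for k
      using H_pm[OF ij(1) that] by auto
    then have "(\<Sum>k<n. H $$ (i, k) * H $$ (i, k)) = (\<Sum>k<n. 1)"
      by simp
    then show ?thesis using True HHT ij by simp
  next
    case False
    have "(\<Sum>k<n. H $$ (i, k) * H $$ (j, k))
        = (\<Sum>k<n. B $$ (i, k) * B $$ (j, k) + (if k = i then B $$ (j, k) else 0)
            + (if k = j then B $$ (i, k) else 0))"
      using False ij B_diag by (intro sum.cong) (auto simp: H_index)
    also have "\<dots> = (B * B\<^sup>T) $$ (i, j) + B $$ (j, i) + B $$ (i, j)"
      using B ij by (simp add: sum.distrib scalar_prod_def atLeast0LessThan)
    also have "\<dots> = 0" using orth[OF ij False] B_swap[OF ij] by simp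
    finally show ?thesis using False HHT ij by simp
  qed
  have "H + H\<^sup>T = 2 \<cdot>\<^sub>m 1\<^sub>m n"
  proof (rule eq_matI)
    fix i j assume "i < dim_row (2 \<cdot>\<^sub>m 1\<^sub>m n :: int mat)" "j < dim_col (2 \<cdot>\<^sub>m 1\<^sub>m n :: int mat)"
    then have ij: "i < n" "j < n" by auto
    show "(H + H\<^sup>T) $$ (i, j) = (2 \<cdot>\<^sub>m 1\<^sub>m n) $$ (i, j)"
      using H ij B_swap[OF ij] by (simp add: H_index)
  qed (use H in auto)
  moreover have "H * H\<^sup>T = int n \<cdot>\<^sub>m 1\<^sub>m n"
    using H by (intro eq_matI) (auto simp del: index_mult_mat simp: rows, auto)
  ultimately show ?thesis
    using H H_pm by (simp add: skew_hadamard_def H_def)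
qed

lemma hadamard_order_dvd_four:
  fixes H :: "int mat"
  assumes H: "H \<in> carrier_mat n n"
    and pm: "\<And>i j. i < n \<Longrightarrow> j < n \<Longrightarrow> H $$ (i, j) = 1 \<or> H $$ (i, j) = -1"
    and orth: "H * H\<^sup>T = int n \<cdot>\<^sub>m 1\<^sub>m n" and n: "2 < n"
  shows "4 dvd n"
proof -
  have rows: "(\<Sum>k<n. H $$ (i, k) * H $$ (j, k)) = (if i = j then int n else 0)"
    if "i < n" "j < n" for i j
  proof -
    have "(\<Sum>k<n. H $$ (i, k) * H $$ (j, k)) = (H * H\<^sup>T) $$ (i, j)"
      using H that by (auto simp: scalar_prod_def atLeast0LessThan intro!: sum.cong)
    then show ?thesis using orth that by simp
  qed
  define h where "h i k = H $$ (i, k)" for i k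
  \<comment> \<open>Rows 0, 1, 2: each summand \<open>(h 0 k + h 1 k) * (h 0 k + h 2 k)\<close> is 0 or 4.\<close>
  define K where "K = {k \<in> {..<n}. h 1 k = h 0 k \<and> h 2 k = h 0 k}"
  have "(\<Sum>k<n. (h 0 k + h 1 k) * (h 0 k + h 2 k))
      = (\<Sum>k<n. h 0 k * h 0 k) + (\<Sum>k<n. h 0 k * h 2 k) + (\<Sum>k<n. h 1 k * h 0 k)
        + (\<Sum>k<n. h 1 k * h 2 k)"
    by (simp add: algebra_simps sum.distrib)
  also have "\<dots> = int n" using rows n by (simp add: h_def)
  finally have "int n = (\<Sum>k<n. (h 0 k + h 1 k) * (h 0 k + h 2 k))" ..
  also have "\<dots> = (\<Sum>k<n. if k \<in> K then 4 else 0)"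
  proof (rule sum.cong)
    fix k assume "k \<in> {..<n}"
    then show "(h 0 k + h 1 k) * (h 0 k + h 2 k) = (if k \<in> K then 4 else 0)"
      using pm[of 0 k] pm[of 1 k] pm[of 2 k] n by (auto simp: h_def K_def)
  qed simp
  also have "\<dots> = 4 * int (card K)"
    by (simp add: sum.If_cases K_def Collect_conj_eq lessThan_def)
  finally show ?thesis by presburger
qed

lemma least_eig_mult_if_spectrum_pm:
  fixes S :: "complex mat" and \<theta> :: real
  assumes "0 < \<theta>" "1 \<le> d"
    and cp: "char_poly S = [:complex_of_real \<theta>, 1:] ^ d * [:- complex_of_real \<theta>, 1:] ^ d"
  shows "least_eig_mult S = d"
proof -
  have "poly (char_poly S) (complex_of_real x) = 0 \<longleftrightarrow> x = - \<theta> \<or> x = \<theta>" for x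
  proof -
    have "poly (char_poly S) (complex_of_real x) = (complex_of_real (\<theta> + x)) ^ d * (complex_of_real (x - \<theta>)) ^ d"
      by (simp add: cp)
    then show ?thesis using assms(2) by (auto simp del: of_real_add of_real_diff)
  qed
  then have "{r. poly (char_poly S) (complex_of_real r) = 0} = {- \<theta>, \<theta>}" by auto
  then have "least_eig S = - \<theta>" using assms(1) by (simp add: least_eig_def)
  moreover have "order (complex_of_real (- \<theta>)) ([:- complex_of_real \<theta>, 1:] ^ d) = 0"
    using assms(1) by (intro order_0I) simp
  moreover have "order (complex_of_real (- \<theta>)) ([:complex_of_real \<theta>, 1:] ^ d) = d"
    using order_power_n_n[of "- complex_of_real \<theta>" d] by simp
  moreover have "char_poly S \<noteq> 0" by (simp add: cp)
  ultimately show ?thesis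
    unfolding least_eig_mult_def by (simp add: order_mult cp)
qed

theorem lemma4p4:
  fixes d :: nat and T :: "nat \<Rightarrow> nat \<Rightarrow> bool" and \<theta> :: real
  assumes "d \<ge> 1"
    and "type2_tournament (2 * d) T"
    and "\<theta> > 0"
    and "char_poly (seidel (tour_adj (2 * d) T)) =
           [:complex_of_real \<theta>, 1:] ^ d * [:- complex_of_real \<theta>, 1:] ^ d"
  shows "even d \<and>
    skew_hadamard (2 * d) (1\<^sub>m (2 * d) + tour_adj (2 * d) T - (tour_adj (2 * d) T)\<^sup>T)"
proof -
  define n where "n = 2 * d"
  define A where "A = tour_adj n T"
  have A: "A \<in> carrier_mat n n" by (simp add: A_def tour_adj_def)
  have tour: "tournament n T" and mult: "least_eig_mult (seidel A) > 1"
    using assms(2) unfolding type2_tournament_def Let_def n_def A_def by auto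
  have cp: "char_poly (seidel A) = [:complex_of_real \<theta>, 1:] ^ d * [:- complex_of_real \<theta>, 1:] ^ d"
    using assms(4) by (simp add: n_def A_def)
  have gram: "map_mat real_of_int ((A - A\<^sup>T) * (A - A\<^sup>T)\<^sup>T) = \<theta>\<^sup>2 \<cdot>\<^sub>m 1\<^sub>m n"
    by (rule gram_skew_part_if_seidel_spectrum_pm[OF A cp])
  have H: "skew_hadamard n (1\<^sub>m n + (A - A\<^sup>T))"
  proof (rule skew_hadamard_one_plus_skew)
    show "A - A\<^sup>T \<in> carrier_mat n n" using A by (intro minus_carrier_mat) simp
    show "(A - A\<^sup>T)\<^sup>T = - (A - A\<^sup>T)" using A by (intro eq_matI) auto
    show "(A - A\<^sup>T) $$ (i, j) = 1 \<or> (A - A\<^sup>T) $$ (i, j) = -1" if "i < n" "j < n" "i \<noteq> j" for i j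
      using index_tour_adj_minus_transpose[OF tour that(1,2)] that(3) by (simp add: A_def)
    show "((A - A\<^sup>T) * (A - A\<^sup>T)\<^sup>T) $$ (i, j) = 0" if "i < n" "j < n" "i \<noteq> j" for i j
      using arg_cong[OF gram, of "\<lambda>M. M $$ (i, j)"] A that by simp
  qed
  have "d = least_eig_mult (seidel A)" using least_eig_mult_if_spectrum_pm[OF assms(3,1) cp] ..
  then have "4 dvd n"
    using H mult by (intro hadamard_order_dvd_four[of "1\<^sub>m n + (A - A\<^sup>T)"]) (auto simp: skew_hadamard_def n_def)
  moreover have "1\<^sub>m n + (A - A\<^sup>T) = 1\<^sub>m n + A - A\<^sup>T" using A by (intro eq_matI) auto
  ultimately show ?thesis using H by (auto simp: n_def A_def)
qed

end
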